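(* Let $\alpha\ge0$ and let $a<b$ be real numbers, with $a>0$ if $\alpha>0$. Let $$f_{\alpha,a}(x)=\frac1{2\pi}\sqrt{\frac{b-x}{x-a}}\Big(2x+b-a-2\alpha\sqrt{\frac ab}\frac1x\Big),\qquad x\in\,]a,b]$$ (for $\alpha=0$ the last term is absent). Then $f_{\alpha,a}(x)\,dx$ defines a probability measure on $]a,b]$ if and only if $\psi_\alpha(b,a)=0$ and $\varphi_\alpha(b,a)\ge0$, where $$\varphi_\alpha(x,a)=x+a-\frac{2\alpha}{\sqrt{ax}},\qquad \psi_\alpha(x,a)=\frac34(x-a)^2+a(x-a)+2\alpha\frac{\sqrt a}{\sqrt x}-2\alpha-2$$ (for $\alpha=0$: $\varphi_0(x,a)=x+a$, $\psi_0(x,a)=\frac34(x-a)^2+a(x-a)-2$). *)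

theory Defs
  imports "HOL-Probability.Probability"
begin

text \<open>The density f_{alpha,a} on ]a,b]. For alpha = 0 the last term vanishes
  (the factor 2*alpha is 0), matching the paper's convention.\<close>
definition f_dens :: "real \<Rightarrow> real \<Rightarrow> real \<Rightarrow> real \<Rightarrow> real" where
  "f_dens \<alpha> a b x =
     1 / (2 * pi) * sqrt ((b - x) / (x - a)) *
       (2 * x + b - a - 2 * \<alpha> * sqrt (a / b) * (1 / x))"

definition phi :: "real \<Rightarrow> real \<Rightarrow> real \<Rightarrow> real" where
  "phi \<alpha> x a = x + a - 2 * \<alpha> / sqrt (a * x)"

definition psi :: "real \<Rightarrow> real \<Rightarrow> real \<Rightarrow> real" where
  "psi \<alpha> x a = 3 / 4 * (x - a)^2 + a * (x - a) + 2 * \<alpha> * sqrt a / sqrt x - 2 * \<alpha> - 2"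

definition defines_prob_measure :: "(real \<Rightarrow> real) \<Rightarrow> real set \<Rightarrow> bool" where
  "defines_prob_measure f S \<longleftrightarrow>
     (AE x in lborel. x \<in> S \<longrightarrow> 0 \<le> f x) \<and>
     prob_space (density (restrict_space lborel S) (\<lambda>x. ennreal (f x)))"

end

theory Submission
  imports Defs
begin

text \<open>
  Write the density as \<open>sqrt ((b - x) / (x - a)) * g x / (2 * pi)\<close> with
  \<open>g x = 2 x + b - a - 2 \<alpha> sqrt (a / b) / x\<close>. Since \<open>\<alpha> \<ge> 0\<close>, \<open>g\<close> is increasing on
  \<open>]a, b]\<close> and \<open>g a = \<phi>\<^sub>\<alpha>(b, a)\<close>; so the density is nonnegative iff \<open>\<phi>\<^sub>\<alpha>(b, a) \<ge> 0\<close>,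
  and otherwise it is negative on a whole interval to the right of \<open>a\<close>.
  In the nonnegative case the density has an explicit primitive built from
  \<open>sqrt ((x - a) (b - x))\<close> and \<open>arctan\<close> of multiples of \<open>sqrt ((b - x) / (x - a))\<close>;
  its limits at the end points give the total mass
  \<open>(b - a) (3 b + a) / 8 + \<alpha> sqrt (a / b) - \<alpha>\<close>, and \<open>\<psi>\<^sub>\<alpha>(b, a)\<close> is twice the mass minus 2.
\<close>

lemma has_real_derivative_sqrt_ratio:
  fixes a b x :: real
  assumes "a < x" "x < b"
  shows "((\<lambda>x. sqrt (b - x) / sqrt (x - a)) has_real_derivative
           - (b - a) / (2 * (x - a) * sqrt (x - a) * sqrt (b - x))) (at x)"
proof -
  define U where "U = sqrt (x - a)"
  define V where "V = sqrt (b - x)"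
  have U: "U > 0" "U * U = x - a" and V: "V > 0" "V * V = b - x"
    using assms by (auto simp: U_def V_def)
  have "((\<lambda>x. sqrt (b - x) / sqrt (x - a)) has_real_derivative
         (- inverse (2 * V) * U - V * inverse (2 * U)) / (U * U)) (at x)"
    unfolding U_def V_def using assms
    by (auto intro!: derivative_eq_intros)
  moreover have "(- inverse (2 * V) * U - V * inverse (2 * U)) / (U * U) = - (U * U + V * V) / (2 * (U * U) * U * V)"
    using U(1) V(1) by (simp add: field_simps)
  ultimately show ?thesis
    by (simp add: U V flip: U_def V_def)
qed

lemma has_real_derivative_arctan_scaled_ratio:
  fixes a b r x :: real
  assumes "a < x" "x < b"
  shows "((\<lambda>x. arctan (r * (sqrt (b - x) / sqrt (x - a)))) has_real_derivative
           - r * (b - a) / (2 * sqrt (x - a) * sqrt (b - x) * ((x - a) + r\<^sup>2 * (b - x)))) (at x)"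
proof -
  let ?s = "\<lambda>x. sqrt (b - x) / sqrt (x - a)"
  define W where "W = (x - a) + r\<^sup>2 * (b - x)"
  have "W > 0"
    using assms by (simp add: W_def add_pos_nonneg)
  have "inverse (1 + (r * ?s x)\<^sup>2) = (x - a) / W"
    using assms by (simp add: W_def field_simps)
  moreover have "((\<lambda>x. arctan (r * ?s x)) has_real_derivative
      inverse (1 + (r * ?s x)\<^sup>2) * (r * (- (b - a) / (2 * (x - a) * sqrt (x - a) * sqrt (b - x))))) (at x)"
    by (intro DERIV_chain2[OF DERIV_arctan] DERIV_cmult has_real_derivative_sqrt_ratio assms)
  moreover have "(x - a) / W * (r * (- (b - a) / (2 * (x - a) * sqrt (x - a) * sqrt (b - x))))
      = - r * (b - a) / (2 * sqrt (x - a) * sqrt (b - x) * W)"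
    using assms \<open>W > 0\<close> by (simp add: field_simps)
  ultimately show ?thesis
    by (simp only: W_def)
qed

lemma has_real_derivative_sqrt_prod:
  fixes a b x :: real
  assumes "a < x" "x < b"
  shows "((\<lambda>x. sqrt (x - a) * sqrt (b - x)) has_real_derivative
           (a + b - 2 * x) / (2 * sqrt (x - a) * sqrt (b - x))) (at x)"
proof -
  define U where "U = sqrt (x - a)"
  define V where "V = sqrt (b - x)"
  have U: "U > 0" "U * U = x - a" and V: "V > 0" "V * V = b - x"
    using assms by (auto simp: U_def V_def)
  have "((\<lambda>x. sqrt (x - a) * sqrt (b - x)) has_real_derivative
         inverse (2 * U) * V + U * - inverse (2 * V)) (at x)"
    unfolding U_def V_def using assms
    by (auto intro!: derivative_eq_intros)
  moreover have "inverse (2 * U) * V + U * - inverse (2 * V) = (a + b - 2 * x) / (2 * U * V)"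
    using U V by (simp add: field_simps)
  ultimately show ?thesis
    by (simp flip: U_def V_def)
qed

lemma has_real_derivative_arctan_sqrt_ratio:
  fixes a b x :: real
  assumes "a < x" "x < b"
  shows "((\<lambda>x. arctan (sqrt (b - x) / sqrt (x - a))) has_real_derivative
           - 1 / (2 * sqrt (x - a) * sqrt (b - x))) (at x)"
proof -
  have "- 1 * (b - a) / (2 * sqrt (x - a) * sqrt (b - x) * ((x - a) + 1\<^sup>2 * (b - x)))
      = - 1 / (2 * sqrt (x - a) * sqrt (b - x))"
    using assms by (simp add: field_simps)
  then show ?thesis
    using has_real_derivative_arctan_scaled_ratio[OF assms, of 1] by simp
qed

lemma sqrt_ratio_tendsto_at_top:
  fixes a b :: real
  assumes "a < b"
  shows "LIM x at_right a. sqrt (b - x) / sqrt (x - a) :> at_top"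
proof (rule LIM_at_top_divide)
  show "((\<lambda>x. sqrt (b - x)) \<longlongrightarrow> sqrt (b - a)) (at_right a)"
    by (intro tendsto_intros)
  show "0 < sqrt (b - a)"
    using assms by simp
  have "((\<lambda>x. sqrt (x - a)) \<longlongrightarrow> sqrt (a - a)) (at_right a)"
    by (intro tendsto_intros)
  then show "((\<lambda>x. sqrt (x - a)) \<longlongrightarrow> 0) (at_right a)"
    by simp
  show "\<forall>\<^sub>F x in at_right a. 0 < sqrt (x - a)"
    using eventually_at_right_less[of a] by eventually_elim simp
qed

lemma arctan_scaled_sqrt_ratio_tendsto:
  fixes a b r :: real
  assumes "a < b" "r > 0"
  shows "((\<lambda>x. arctan (r * (sqrt (b - x) / sqrt (x - a)))) \<longlongrightarrow> pi / 2) (at_right a)"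
  using filterlim_tendsto_pos_mult_at_top[OF tendsto_const assms(2) sqrt_ratio_tendsto_at_top[OF assms(1)]]
  by (rule filterlim_compose[OF tendsto_arctan_at_top])

definition linear_antideriv :: "real \<Rightarrow> real \<Rightarrow> real \<Rightarrow> real" where
  "linear_antideriv a b x =
     (x + (a + b) / 2) * (sqrt (x - a) * sqrt (b - x))
     - (b - a) * (a + 3 * b) / 2 * arctan (sqrt (b - x) / sqrt (x - a))"

lemma has_real_derivative_linear_antideriv:
  fixes a b x :: real
  assumes "a < x" "x < b"
  shows "(linear_antideriv a b has_real_derivative sqrt (b - x) / sqrt (x - a) * (2 * x + b - a)) (at x)"
proof -
  define U where "U = sqrt (x - a)"
  define V where "V = sqrt (b - x)"
  have U: "U > 0" "a = x - U * U" and V: "V > 0" "b = x + V * V"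
    using assms by (auto simp: U_def V_def)
  have "(linear_antideriv a b has_real_derivative
      (1 + 0) * (U * V) + (a + b - 2 * x) / (2 * U * V) * (x + (a + b) / 2)
      - (b - a) * (a + 3 * b) / 2 * (- 1 / (2 * U * V))) (at x)"
    unfolding linear_antideriv_def[abs_def] U_def V_def
    by (intro DERIV_diff DERIV_mult DERIV_cmult DERIV_add DERIV_ident DERIV_const
        has_real_derivative_sqrt_prod has_real_derivative_arctan_sqrt_ratio assms)
  also have "(1 + 0) * (U * V) + (a + b - 2 * x) / (2 * U * V) * (x + (a + b) / 2)
      - (b - a) * (a + 3 * b) / 2 * (- 1 / (2 * U * V)) = V / U * (2 * x + b - a)"
    using U(1) V(1) unfolding U(2) V(2) by (simp add: field_simps)
  finally show ?thesis
    by (simp add: U_def V_def)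
qed

lemma linear_antideriv_tendsto_left_end:
  fixes a b :: real
  assumes "a < b"
  shows "(linear_antideriv a b \<longlongrightarrow> - (b - a) * (a + 3 * b) * pi / 4) (at_right a)"
proof -
  have "((\<lambda>x. sqrt (x - a) * sqrt (b - x)) \<longlongrightarrow> sqrt (a - a) * sqrt (b - a)) (at_right a)"
    by (intro tendsto_intros)
  then have "(linear_antideriv a b \<longlongrightarrow>
      (a + (a + b) / 2) * (sqrt (a - a) * sqrt (b - a)) - (b - a) * (a + 3 * b) / 2 * (pi / 2)) (at_right a)"
    unfolding linear_antideriv_def[abs_def]
    using arctan_scaled_sqrt_ratio_tendsto[OF assms, of 1]
    by (intro tendsto_intros) simp_all
  then show ?thesis
    by (rule tendsto_eq_rhs) (simp add: field_simps)
qed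

lemma linear_antideriv_tendsto_right_end:
  fixes a b :: real
  assumes "a < b"
  shows "(linear_antideriv a b \<longlongrightarrow> 0) (at_left b)"
proof -
  have "isCont (linear_antideriv a b) b"
    unfolding linear_antideriv_def[abs_def] using assms by (intro continuous_intros) auto
  then show ?thesis
    by (simp add: isCont_def filterlim_at_split linear_antideriv_def)
qed

text \<open>With \<open>r\<^sup>2 = a / b\<close> the denominator \<open>(x - a) + r\<^sup>2 (b - x)\<close> in the derivative of
  \<open>arctan (r * sqrt ((b - x) / (x - a)))\<close> becomes \<open>x (b - a) / b\<close>, which produces the pole at 0.\<close>

definition pole_antideriv :: "real \<Rightarrow> real \<Rightarrow> real \<Rightarrow> real" where
  "pole_antideriv a b x =
     2 * sqrt (a / b) * arctan (sqrt (b - x) / sqrt (x - a))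
     - 2 * arctan (sqrt (a / b) * (sqrt (b - x) / sqrt (x - a)))"

lemma has_real_derivative_pole_antideriv:
  fixes a b x :: real
  assumes "0 < a" "a < x" "x < b"
  shows "(pole_antideriv a b has_real_derivative sqrt (a / b) * (sqrt (b - x) / sqrt (x - a)) / x) (at x)"
proof -
  define U where "U = sqrt (x - a)"
  define V where "V = sqrt (b - x)"
  define r where "r = sqrt (a / b)"
  have U: "U > 0" and V: "V > 0" "V * V = b - x"
    using assms by (auto simp: U_def V_def)
  have "r\<^sup>2 = a / b"
    using assms by (simp add: r_def)
  then have W: "(x - a) + r\<^sup>2 * (b - x) = x * (b - a) / b"
    using assms by (simp add: field_simps)
  have "(pole_antideriv a b has_real_derivative
      2 * r * (- 1 / (2 * U * V))
      - 2 * (- r * (b - a) / (2 * U * V * ((x - a) + r\<^sup>2 * (b - x))))) (at x)"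
    unfolding pole_antideriv_def[abs_def] U_def V_def r_def
    by (intro DERIV_diff DERIV_cmult
        has_real_derivative_arctan_scaled_ratio has_real_derivative_arctan_sqrt_ratio assms)
  also have "2 * r * (- 1 / (2 * U * V))
      - 2 * (- r * (b - a) / (2 * U * V * ((x - a) + r\<^sup>2 * (b - x)))) = r * (b - x) / (U * V * x)"
    unfolding W using U V(1) assms by (simp add: field_simps)
  also have "\<dots> = r * (V / U) / x"
    unfolding V(2)[symmetric] using U V(1) \<open>0 < a\<close> \<open>a < x\<close> by (simp add: field_simps)
  finally show ?thesis
    by (simp add: U_def V_def r_def)
qed

lemma pole_antideriv_tendsto_left_end:
  fixes a b :: real
  assumes "0 < a" "a < b"
  shows "(pole_antideriv a b \<longlongrightarrow> pi * (sqrt (a / b) - 1)) (at_right a)"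
proof -
  have "(pole_antideriv a b \<longlongrightarrow> 2 * sqrt (a / b) * (pi / 2) - 2 * (pi / 2)) (at_right a)"
    unfolding pole_antideriv_def[abs_def]
    using assms arctan_scaled_sqrt_ratio_tendsto[OF assms(2), of 1]
    by (intro tendsto_intros arctan_scaled_sqrt_ratio_tendsto) simp_all
  then show ?thesis
    by (rule tendsto_eq_rhs) (simp add: right_diff_distrib)
qed

lemma pole_antideriv_tendsto_right_end:
  fixes a b :: real
  assumes "a < b"
  shows "(pole_antideriv a b \<longlongrightarrow> 0) (at_left b)"
proof -
  have "isCont (pole_antideriv a b) b"
    unfolding pole_antideriv_def[abs_def] using assms by (intro continuous_intros) auto
  then show ?thesis
    by (simp add: isCont_def filterlim_at_split pole_antideriv_def)
qed

definition dens_factor :: "real \<Rightarrow> real \<Rightarrow> real \<Rightarrow> real \<Rightarrow> real" where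
  "dens_factor \<alpha> a b x = 2 * x + b - a - 2 * \<alpha> * sqrt (a / b) * (1 / x)"

lemma f_dens_eq_dens_factor:
  assumes "a < x"
  shows "f_dens \<alpha> a b x = sqrt (b - x) / sqrt (x - a) * dens_factor \<alpha> a b x / (2 * pi)"
  unfolding f_dens_def dens_factor_def by (simp add: real_sqrt_divide)

lemma has_real_derivative_f_dens_antideriv:
  fixes \<alpha> a b x :: real
  assumes "\<alpha> \<ge> 0" "\<alpha> > 0 \<Longrightarrow> a > 0" "a < x" "x < b"
  shows "((\<lambda>x. (linear_antideriv a b x - 2 * \<alpha> * pole_antideriv a b x) / (2 * pi))
           has_real_derivative f_dens \<alpha> a b x) (at x)"
proof -
  let ?s = "sqrt (b - x) / sqrt (x - a)"
  have pole: "((\<lambda>x. 2 * \<alpha> * pole_antideriv a b x) has_real_derivative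
      2 * \<alpha> * (sqrt (a / b) * ?s / x)) (at x)"
  proof (cases "\<alpha> = 0")
    case False
    with assms show ?thesis
      by (intro DERIV_cmult has_real_derivative_pole_antideriv) auto
  qed simp
  have "((\<lambda>x. (linear_antideriv a b x - 2 * \<alpha> * pole_antideriv a b x) / (2 * pi))
      has_real_derivative (?s * (2 * x + b - a) - 2 * \<alpha> * (sqrt (a / b) * ?s / x)) / (2 * pi)) (at x)"
    by (intro DERIV_cdivide DERIV_diff has_real_derivative_linear_antideriv pole assms)
  also have "(?s * (2 * x + b - a) - 2 * \<alpha> * (sqrt (a / b) * ?s / x)) / (2 * pi) = f_dens \<alpha> a b x"
    unfolding f_dens_eq_dens_factor[OF assms(3)] dens_factor_def using assms by (simp add: field_simps)
  finally show ?thesis .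
qed

lemma isCont_f_dens:
  assumes "\<alpha> \<ge> 0" "\<alpha> > 0 \<Longrightarrow> a > 0" "a < x" "x < b"
  shows "isCont (f_dens \<alpha> a b) x"
proof (cases "\<alpha> = 0")
  case True
  then have "f_dens \<alpha> a b = (\<lambda>x. 1 / (2 * pi) * sqrt ((b - x) / (x - a)) * (2 * x + b - a))"
    unfolding f_dens_def by simp
  then show ?thesis
    using assms by (auto intro!: continuous_intros)
next
  case False
  then have "x \<noteq> 0"
    using assms by force
  then show ?thesis
    unfolding f_dens_def[abs_def] using assms by (auto intro!: continuous_intros)
qed

lemma set_integral_Ioo_FTC_nonneg:
  fixes f F :: "real \<Rightarrow> real" and a b A B :: real
  assumes "a < b"
    and "\<And>x. a < x \<Longrightarrow> x < b \<Longrightarrow> (F has_real_derivative f x) (at x)"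
    and "\<And>x. a < x \<Longrightarrow> x < b \<Longrightarrow> isCont f x"
    and "\<And>x. a < x \<Longrightarrow> x < b \<Longrightarrow> 0 \<le> f x"
    and "(F \<longlongrightarrow> A) (at_right a)" "(F \<longlongrightarrow> B) (at_left b)"
  shows "set_integrable lborel {a<..<b} f" "(LINT x:{a<..<b}|lborel. f x) = B - A"
proof -
  have "set_integrable lborel (einterval a b) f \<and> (LBINT x=ereal a..ereal b. f x) = B - A"
    using assms
    by (intro conjI interval_integral_FTC_nonneg[where F=F])
       (auto simp: ereal_tendsto_simps1)
  then show "set_integrable lborel {a<..<b} f" "(LINT x:{a<..<b}|lborel. f x) = B - A"
    using assms(1) by (simp_all add: interval_lebesgue_integral_def)
qed

definition f_dens_mass :: "real \<Rightarrow> real \<Rightarrow> real \<Rightarrow> real" where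
  "f_dens_mass \<alpha> a b = (b - a) * (3 * b + a) / 8 + \<alpha> * sqrt (a / b) - \<alpha>"

lemma f_dens_set_integral:
  fixes \<alpha> a b :: real
  assumes "\<alpha> \<ge> 0" "a < b" "\<alpha> > 0 \<Longrightarrow> a > 0"
    and nonneg: "\<And>x. a < x \<Longrightarrow> x < b \<Longrightarrow> 0 \<le> f_dens \<alpha> a b x"
  shows "set_integrable lborel {a<..b} (f_dens \<alpha> a b)"
    and "(LINT x:{a<..b}|lborel. f_dens \<alpha> a b x) = f_dens_mass \<alpha> a b"
proof -
  define F where "F x = (linear_antideriv a b x - 2 * \<alpha> * pole_antideriv a b x) / (2 * pi)" for x
  have pole_left: "((\<lambda>x. 2 * \<alpha> * pole_antideriv a b x) \<longlongrightarrow> 2 * \<alpha> * (pi * (sqrt (a / b) - 1))) (at_right a)"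
  proof (cases "\<alpha> = 0")
    case False
    with assms show ?thesis
      by (intro tendsto_mult tendsto_const pole_antideriv_tendsto_left_end) auto
  qed simp
  have left: "(F \<longlongrightarrow> (- (b - a) * (a + 3 * b) * pi / 4 - 2 * \<alpha> * (pi * (sqrt (a / b) - 1))) / (2 * pi)) (at_right a)"
    unfolding F_def
    by (intro tendsto_divide tendsto_diff tendsto_const linear_antideriv_tendsto_left_end pole_left assms)
       simp
  have right: "(F \<longlongrightarrow> (0 - 2 * \<alpha> * 0) / (2 * pi)) (at_left b)"
    unfolding F_def
    by (intro tendsto_intros linear_antideriv_tendsto_right_end pole_antideriv_tendsto_right_end assms)
       simp
  have deriv: "(F has_real_derivative f_dens \<alpha> a b x) (at x)" if "a < x" "x < b" for x
    unfolding F_def[abs_def] using assms(1,3) that by (rule has_real_derivative_f_dens_antideriv)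
  have cont: "isCont (f_dens \<alpha> a b) x" if "a < x" "x < b" for x
    using assms that by (intro isCont_f_dens)
  note FTC = set_integral_Ioo_FTC_nonneg[OF assms(2) deriv cont nonneg left right]
  have "(LINT x:{a<..<b}|lborel. f_dens \<alpha> a b x)
      = (0 - 2 * \<alpha> * 0) / (2 * pi)
        - (- (b - a) * (a + 3 * b) * pi / 4 - 2 * \<alpha> * (pi * (sqrt (a / b) - 1))) / (2 * pi)"
    by (rule FTC(2))
  also have "\<dots> = f_dens_mass \<alpha> a b"
    by (simp add: f_dens_mass_def field_simps)
  finally have "(LINT x:{a<..<b}|lborel. f_dens \<alpha> a b x) = \<dots>" .
  moreover have "(\<lambda>x. indicator {a<..b} x *\<^sub>R f_dens \<alpha> a b x) = (\<lambda>x. indicator {a<..<b} x *\<^sub>R f_dens \<alpha> a b x)"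
    by (auto simp: fun_eq_iff f_dens_def indicator_def)
  ultimately show "set_integrable lborel {a<..b} (f_dens \<alpha> a b)"
    and "(LINT x:{a<..b}|lborel. f_dens \<alpha> a b x) = f_dens_mass \<alpha> a b"
    using FTC(1) by (simp_all only: set_integrable_def set_lebesgue_integral_def)
qed

lemma dens_factor_left_end:
  assumes "\<alpha> \<ge> 0" "a < b" "\<alpha> > 0 \<Longrightarrow> a > 0"
  shows "dens_factor \<alpha> a b a = phi \<alpha> b a"
proof (cases "\<alpha> = 0")
  case False
  with assms have "a > 0" "b > 0"
    by auto
  moreover have "sqrt a * sqrt a = a"
    using \<open>a > 0\<close> by simp
  ultimately have "sqrt (a / b) * (1 / a) = 1 / sqrt (b * a)"
    by (simp add: real_sqrt_divide real_sqrt_mult field_simps)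
  then show ?thesis
    unfolding dens_factor_def phi_def by (simp add: algebra_simps)
qed (simp add: dens_factor_def phi_def)

lemma dens_factor_mono:
  assumes "\<alpha> \<ge> 0" "a < b" "\<alpha> > 0 \<Longrightarrow> a > 0" "a \<le> x" "x \<le> y"
  shows "dens_factor \<alpha> a b x \<le> dens_factor \<alpha> a b y"
proof (cases "\<alpha> = 0")
  case False
  with assms have "0 < a" "0 < x"
    by auto
  with assms have "2 * \<alpha> * sqrt (a / b) * (1 / y) \<le> 2 * \<alpha> * sqrt (a / b) * (1 / x)"
    by (intro mult_left_mono divide_left_mono) auto
  with assms show ?thesis
    unfolding dens_factor_def by linarith
qed (use assms in \<open>simp add: dens_factor_def\<close>)

lemma dens_factor_tendsto_left_end:
  assumes "\<alpha> \<ge> 0" "a < b" "\<alpha> > 0 \<Longrightarrow> a > 0"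
  shows "(dens_factor \<alpha> a b \<longlongrightarrow> phi \<alpha> b a) (at_right a)"
proof -
  have "isCont (dens_factor \<alpha> a b) a"
  proof (cases "\<alpha> = 0")
    case True
    then show ?thesis
      unfolding dens_factor_def by (auto intro!: continuous_intros)
  next
    case False
    with assms have "a \<noteq> 0"
      by force
    then show ?thesis
      unfolding dens_factor_def[abs_def] by (auto intro!: continuous_intros)
  qed
  then show ?thesis
    using dens_factor_left_end[OF assms] by (simp add: isCont_def filterlim_at_split)
qed

lemma f_dens_nonneg:
  assumes "\<alpha> \<ge> 0" "a < b" "\<alpha> > 0 \<Longrightarrow> a > 0" "phi \<alpha> b a \<ge> 0" "a < x" "x \<le> b"
  shows "0 \<le> f_dens \<alpha> a b x"
proof -
  have "0 \<le> dens_factor \<alpha> a b x"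
    using dens_factor_mono[OF assms(1-3), of a x] dens_factor_left_end[OF assms(1-3)] assms(4-)
    by simp
  then show ?thesis
    unfolding f_dens_eq_dens_factor[OF assms(5)] using assms by simp
qed

lemma eventually_f_dens_neg:
  assumes "\<alpha> \<ge> 0" "a < b" "\<alpha> > 0 \<Longrightarrow> a > 0" "phi \<alpha> b a < 0"
  shows "\<forall>\<^sub>F x in at_right a. x \<in> {a<..<b} \<and> f_dens \<alpha> a b x < 0"
proof -
  have "\<forall>\<^sub>F x in at_right a. dens_factor \<alpha> a b x < 0"
    using order_tendstoD(2)[OF dens_factor_tendsto_left_end[OF assms(1-3)] assms(4)] .
  moreover have "\<forall>\<^sub>F x in at_right a. x \<in> {a<..<b}"
    using assms(2) by (auto simp: eventually_at_right_field)
  ultimately show ?thesis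
  proof eventually_elim
    case (elim x)
    then have "a < x" "0 < sqrt (b - x) / sqrt (x - a)"
      by simp_all
    then have "f_dens \<alpha> a b x < 0"
      unfolding f_dens_eq_dens_factor[OF \<open>a < x\<close>]
      by (intro divide_neg_pos mult_pos_neg elim(1)) simp_all
    with elim show ?case
      by simp
  qed
qed

lemma psi_eq_f_dens_mass:
  "psi \<alpha> b a = 2 * (f_dens_mass \<alpha> a b - 1)"
  unfolding psi_def f_dens_mass_def by (simp add: real_sqrt_divide field_simps power2_eq_square)

lemma defines_prob_measure_iff_set_integral:
  fixes f :: "real \<Rightarrow> real"
  assumes "S \<in> sets borel" "f \<in> borel_measurable borel"
    and "\<And>x. x \<in> S \<Longrightarrow> 0 \<le> f x" "set_integrable lborel S f"
  shows "defines_prob_measure f S \<longleftrightarrow> (LINT x:S|lborel. f x) = 1"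
proof -
  define M where "M = density (restrict_space lborel S) (\<lambda>x. ennreal (f x))"
  have "emeasure M (space M) = (\<integral>\<^sup>+ x. ennreal (f x) * indicator S x \<partial>restrict_space lborel S)"
    unfolding M_def using assms(1,2)
    by (subst emeasure_density) (auto intro: measurable_restrict_space1 simp: sets_restrict_space_iff)
  also have "\<dots> = (\<integral>\<^sup>+ x. ennreal (indicator S x * f x) \<partial>lborel)"
    using assms(1)
    by (subst nn_integral_restrict_space) (auto intro!: nn_integral_cong simp: indicator_def)
  also have "\<dots> = ennreal (LINT x:S|lborel. f x)"
    using assms(3,4)
    by (subst nn_integral_eq_integral)
       (auto simp: set_integrable_def set_lebesgue_integral_def indicator_def)
  finally have "prob_space M \<longleftrightarrow> (LINT x:S|lborel. f x) = 1"
    using prob_space.emeasure_space_1 prob_spaceI by fastforce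
  moreover have "AE x in lborel. x \<in> S \<longrightarrow> 0 \<le> f x"
    using assms(3) by simp
  ultimately show ?thesis
    unfolding defines_prob_measure_def M_def by blast
qed

lemma not_defines_prob_measure_if_eventually_neg:
  fixes f :: "real \<Rightarrow> real"
  assumes "\<forall>\<^sub>F x in at_right c. x \<in> S \<and> f x < 0"
  shows "\<not> defines_prob_measure f S"
proof
  obtain d where "d > c" and neg: "\<And>x. c < x \<Longrightarrow> x < d \<Longrightarrow> x \<in> S \<and> f x < 0"
    using assms unfolding eventually_at_right_field by blast
  assume "defines_prob_measure f S"
  then have "AE x in lborel. x \<in> S \<longrightarrow> 0 \<le> f x"
    unfolding defines_prob_measure_def ..
  then have "AE x in lborel. x \<notin> {c<..<d}"
    by eventually_elim (use neg in force)
  then have "emeasure lborel {c<..<d} = 0"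
    by (subst (asm) AE_iff_measurable[of "{c<..<d}"]) auto
  with \<open>d > c\<close> show False
    by simp
qed

theorem lemma4p1:
  fixes \<alpha> a b :: real
  assumes "\<alpha> \<ge> 0" and "a < b" and "\<alpha> > 0 \<Longrightarrow> a > 0"
  shows "defines_prob_measure (f_dens \<alpha> a b) {a<..b} \<longleftrightarrow>
           psi \<alpha> b a = 0 \<and> phi \<alpha> b a \<ge> 0"
proof (cases "phi \<alpha> b a \<ge> 0")
  case True
  note nonneg = f_dens_nonneg[OF assms True]
  have "f_dens \<alpha> a b \<in> borel_measurable borel"
    unfolding f_dens_def[abs_def] by measurable
  then have "defines_prob_measure (f_dens \<alpha> a b) {a<..b} \<longleftrightarrow> f_dens_mass \<alpha> a b = 1"
    using nonneg f_dens_set_integral[OF assms nonneg]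
    by (subst defines_prob_measure_iff_set_integral) auto
  then show ?thesis
    using True psi_eq_f_dens_mass[of \<alpha> b a] by auto
next
  case False
  then have "\<forall>\<^sub>F x in at_right a. x \<in> {a<..b} \<and> f_dens \<alpha> a b x < 0"
    using eventually_f_dens_neg[OF assms] by (auto elim: eventually_mono)
  then show ?thesis
    using False not_defines_prob_measure_if_eventually_neg by blast
qed

end
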